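(* Let $(N,M_0)$ be a three-level PT-net system with transitions $T$ partitioned into low-level $L$, downgrading $D$ and high-level $H$. Then $(N,M_0)$ has the property BINI if and only if for every reachable marking $M_1$ of $(N,M_0)$ and every $h\in H$, $M_1[h\rangle M_2$ implies $\mathcal{L}(N\setminus(H\cup D),M_1)=\mathcal{L}(N\setminus(H\cup D),M_2)$.
   Context: A PT-net is $N=(P,T,F)$ with $P,T$ finite disjoint and $F:(P\times T)\cup(T\times P)\to\mathbb{N}$; markings $M:P\to\mathbb{N}$; $t$ enabled at $M$ ($M[t\rangle$) iff $M(p)\ge F(p,t)$ for all $p$, firing gives $M'(p)=M(p)+F(t,p)-F(p,t)$ ($M[t\rangle M'$); extended to sequences. $N\setminus T'$ deletes the transitions of $T'$. $\mathcal{L}(N\setminus(H\cup D),M)$ is the set of all $s\in L^*$ with $M[s\rangle$. For systems with disjoint place sets, $\mathcal{N}_1|\mathcal{N}_2$ has the union of places, the union of transitions (shared transitions synchronize, arcs inherited from each component on its own places), and union of initial markings; a high-level net system has only high-level transitions. In a two-level system (low $L$, high $H$) transitions in $L$ are observable, those in $H$ unobservable; weak bisimilarity $\approx$ is the existence of a relation between reachable markings containing the initial pair such that, for related $(M,M')$ and symmetrically, an observable step $M[l\rangle$ is matched by unobservable steps, $l$, unobservable steps leading to a related pair, and an unobservable step is matched by unobservable steps leading to a related pair. A two-level system $\mathcal{N}$ has BNDC iff for every high-level net system $\mathcal{N}'$ (places disjoint from those of $\mathcal{N}$) with transition set $H'$ disjoint from $L$, $\mathcal{N}\setminus H\approx(\mathcal{N}|\mathcal{N}')\setminus(H\setminus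 H')$. The three-level system $(N,M_0)$ has BINI iff the two-level system $(N\setminus D,M)$ (low $L$, high $H$) has BNDC for $M=M_0$ and for every marking $M$ with $M_0[\upsilon d\rangle M$ in $N$ for some $\upsilon\in T^*$, $d\in D$. *)

theory Defs
  imports Main
begin

text \<open>A PT-net: finite place set, finite transition set (disjoint since they live in
different types), and the flow function F split into F(p,t) = pre p t and F(t,p) = post t p.
Markings are functions 'p => nat (only values on places matter).\<close>

record ('p, 't) ptnet =
  places :: "'p set"
  trans  :: "'t set"
  pre    :: "'p \<Rightarrow> 't \<Rightarrow> nat"
  post   :: "'t \<Rightarrow> 'p \<Rightarrow> nat"

definition net_wf :: "('p, 't) ptnet \<Rightarrow> bool" where
  "net_wf N \<longleftrightarrow> finite (places N) \<and> finite (trans N)"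

definition enabled :: "('p, 't) ptnet \<Rightarrow> ('p \<Rightarrow> nat) \<Rightarrow> 't \<Rightarrow> bool" where
  "enabled N M t \<longleftrightarrow> t \<in> trans N \<and> (\<forall>p \<in> places N. pre N p t \<le> M p)"

definition fire :: "('p, 't) ptnet \<Rightarrow> ('p \<Rightarrow> nat) \<Rightarrow> 't \<Rightarrow> ('p \<Rightarrow> nat)" where
  "fire N M t = (\<lambda>p. if p \<in> places N then M p + post N t p - pre N p t else M p)"

text \<open>fires N M s M' means M[s>M'.\<close>
fun fires :: "('p, 't) ptnet \<Rightarrow> ('p \<Rightarrow> nat) \<Rightarrow> 't list \<Rightarrow> ('p \<Rightarrow> nat) \<Rightarrow> bool" where
  "fires N M [] M' \<longleftrightarrow> M' = M"
| "fires N M (t # s) M' \<longleftrightarrow> enabled N M t \<and> fires N (fire N M t) s M'"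

definition reach :: "('p, 't) ptnet \<Rightarrow> ('p \<Rightarrow> nat) \<Rightarrow> ('p \<Rightarrow> nat) set" where
  "reach N M0 = {M. \<exists>s. fires N M0 s M}"

text \<open>Language: all firable sequences (these are automatically over trans N).\<close>
definition lang :: "('p, 't) ptnet \<Rightarrow> ('p \<Rightarrow> nat) \<Rightarrow> 't list set" where
  "lang N M = {s. set s \<subseteq> trans N \<and> (\<exists>M'. fires N M s M')}"

definition del_trans :: "('p, 't) ptnet \<Rightarrow> 't set \<Rightarrow> ('p, 't) ptnet" (infixl "\<setminus>\<^sub>N" 65) where
  "N \<setminus>\<^sub>N T' = N\<lparr>trans := trans N - T'\<rparr>"

definition tau_steps :: "('p, 't) ptnet \<Rightarrow> 't set \<Rightarrow> ('p \<Rightarrow> nat) \<Rightarrow> ('p \<Rightarrow> nat) \<Rightarrow> bool" where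
  "tau_steps N Lo M M' \<longleftrightarrow> (\<exists>s. set s \<inter> Lo = {} \<and> fires N M s M')"

definition weak_sim_step ::
  "('p, 't) ptnet \<Rightarrow> ('q, 't) ptnet \<Rightarrow> 't set \<Rightarrow> (('p \<Rightarrow> nat) \<times> ('q \<Rightarrow> nat)) set \<Rightarrow> bool" where
  "weak_sim_step N1 N2 Lo R \<longleftrightarrow>
     (\<forall>(M, M') \<in> R.
        (\<forall>l \<in> Lo. \<forall>M1. fires N1 M [l] M1 \<longrightarrow>
            (\<exists>Ma Mb M2. tau_steps N2 Lo M' Ma \<and> fires N2 Ma [l] Mb \<and> tau_steps N2 Lo Mb M2
                          \<and> (M1, M2) \<in> R))
      \<and> (\<forall>u. u \<notin> Lo \<longrightarrow> (\<forall>M1. fires N1 M [u] M1 \<longrightarrow>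
            (\<exists>M2. tau_steps N2 Lo M' M2 \<and> (M1, M2) \<in> R))))"

definition weak_bisimilar ::
  "('p, 't) ptnet \<Rightarrow> ('p \<Rightarrow> nat) \<Rightarrow> ('q, 't) ptnet \<Rightarrow> ('q \<Rightarrow> nat) \<Rightarrow> 't set \<Rightarrow> bool" where
  "weak_bisimilar N1 M01 N2 M02 Lo \<longleftrightarrow>
     (\<exists>R. (M01, M02) \<in> R \<and> R \<subseteq> reach N1 M01 \<times> reach N2 M02
          \<and> weak_sim_step N1 N2 Lo R \<and> weak_sim_step N2 N1 Lo (converse R))"

text \<open>The environment N' has places from the fresh type nat (so they are disjoint from the
places of N) and transitions of type 't + nat (it may share transitions Inl h with N,
or have completely fresh ones).\<close>

definition lift_net :: "('p, 't) ptnet \<Rightarrow> ('p + nat, 't + nat) ptnet" where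
  "lift_net N = \<lparr>places = Inl ` places N, trans = Inl ` trans N,
     pre = (\<lambda>p t. case (p, t) of (Inl q, Inl u) \<Rightarrow> pre N q u | _ \<Rightarrow> 0),
     post = (\<lambda>t p. case (t, p) of (Inl u, Inl q) \<Rightarrow> post N u q | _ \<Rightarrow> 0)\<rparr>"

definition lift_env :: "(nat, 't + nat) ptnet \<Rightarrow> ('p + nat, 't + nat) ptnet" where
  "lift_env N' = \<lparr>places = Inr ` places N', trans = trans N',
     pre = (\<lambda>p t. case p of Inr q \<Rightarrow> pre N' q t | Inl _ \<Rightarrow> 0),
     post = (\<lambda>t p. case p of Inr q \<Rightarrow> post N' t q | Inl _ \<Rightarrow> 0)\<rparr>"

text \<open>N1 | N2 for nets with disjoint place sets: shared transitions synchronize, each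
component contributes arcs on its own places.\<close>
definition par_net :: "('p, 't) ptnet \<Rightarrow> ('p, 't) ptnet \<Rightarrow> ('p, 't) ptnet" where
  "par_net N1 N2 = \<lparr>places = places N1 \<union> places N2, trans = trans N1 \<union> trans N2,
     pre = (\<lambda>p t. if p \<in> places N1 \<and> t \<in> trans N1 then pre N1 p t
                  else if p \<in> places N2 \<and> t \<in> trans N2 then pre N2 p t else 0),
     post = (\<lambda>t p. if p \<in> places N1 \<and> t \<in> trans N1 then post N1 t p
                  else if p \<in> places N2 \<and> t \<in> trans N2 then post N2 t p else 0)\<rparr>"

definition lift_mark :: "('p \<Rightarrow> nat) \<Rightarrow> ('p + nat \<Rightarrow> nat)" where
  "lift_mark M = (\<lambda>p. case p of Inl q \<Rightarrow> M q | Inr _ \<Rightarrow> 0)"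

definition union_mark :: "('p \<Rightarrow> nat) \<Rightarrow> (nat \<Rightarrow> nat) \<Rightarrow> ('p + nat \<Rightarrow> nat)" where
  "union_mark M M' = (\<lambda>p. case p of Inl q \<Rightarrow> M q | Inr n \<Rightarrow> M' n)"

definition BNDC :: "('p, 't) ptnet \<Rightarrow> ('p \<Rightarrow> nat) \<Rightarrow> 't set \<Rightarrow> 't set \<Rightarrow> bool" where
  "BNDC N M0 L H \<longleftrightarrow>
     (\<forall>(N' :: (nat, 't + nat) ptnet) M0'.
        net_wf N' \<and> trans N' \<inter> Inl ` L = {} \<longrightarrow>
        weak_bisimilar (lift_net (N \<setminus>\<^sub>N H)) (lift_mark M0)
          (par_net (lift_net N) (lift_env N') \<setminus>\<^sub>N (Inl ` H - trans N'))
          (union_mark M0 M0') (Inl ` L))"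

definition BINI :: "('p, 't) ptnet \<Rightarrow> ('p \<Rightarrow> nat) \<Rightarrow> 't set \<Rightarrow> 't set \<Rightarrow> 't set \<Rightarrow> bool" where
  "BINI N M0 L D H \<longleftrightarrow>
     BNDC (N \<setminus>\<^sub>N D) M0 L H \<and>
     (\<forall>M \<upsilon> d. d \<in> D \<and> fires N M0 (\<upsilon> @ [d]) M \<longrightarrow> BNDC (N \<setminus>\<^sub>N D) M L H)"

end

theory Submission
  imports Defs
begin

text \<open>
  BINI asks for BNDC of the net without downgrading transitions, started at M0 and right after every
  downgrading step; the markings reachable in N are exactly those reachable without downgrading from
  these starting markings. So it suffices to show that a two-level system X has BNDC iff no reachable
  high step changes the low language of X without its high transitions.

  If high steps preserve the low language, relating markings of the low system and of a composite
  with an environment whenever their low-level parts have the same low language is a weak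
  bisimulation. Conversely, compose X with a budget environment: one place with k tokens, one of which
  every high transition consumes. The composite can replay a run of X containing k high steps and
  afterwards has no silent moves left, so the bisimilar marking of the low system, which is determined
  by the low projection of the run, has the same low language as the marking reached. The runs s and
  s h have the same low projection, hence h preserves the low language.
\<close>

lemma del_trans_simps [simp]:
  "places (N \<setminus>\<^sub>N S) = places N" "trans (N \<setminus>\<^sub>N S) = trans N - S"
  "pre (N \<setminus>\<^sub>N S) = pre N" "post (N \<setminus>\<^sub>N S) = post N"
  by (simp_all add: del_trans_def)

lemma fire_del_trans [simp]: "fire (N \<setminus>\<^sub>N S) = fire N"
  by (simp add: fire_def fun_eq_iff)

lemma enabled_del_trans [simp]: "enabled (N \<setminus>\<^sub>N S) M t \<longleftrightarrow> t \<notin> S \<and> enabled N M t"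
  by (auto simp add: enabled_def)

lemma del_trans_del_trans: "N \<setminus>\<^sub>N D \<setminus>\<^sub>N H = N \<setminus>\<^sub>N (H \<union> D)"
  by (simp add: del_trans_def Diff_Un Diff_eq Int_commute Int_left_commute)

lemma enabled_in_trans: "enabled N M t \<Longrightarrow> t \<in> trans N"
  by (simp add: enabled_def)

lemma fires_append: "fires N M (s @ s') M'' \<longleftrightarrow> (\<exists>M'. fires N M s M' \<and> fires N M' s' M'')"
  by (induction s arbitrary: M) auto

lemma fires_deterministic: "fires N M s M1 \<Longrightarrow> fires N M s M2 \<Longrightarrow> M1 = M2"
  by (induction s arbitrary: M) auto

lemma fires_subset_trans: "fires N M s M' \<Longrightarrow> set s \<subseteq> trans N"
  by (induction s arbitrary: M) (auto simp: enabled_def)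

lemma fires_del_trans_iff: "fires (N \<setminus>\<^sub>N S) M s M' \<longleftrightarrow> set s \<inter> S = {} \<and> fires N M s M'"
  by (induction s arbitrary: M) auto

lemma lang_eq_fires: "lang N M = {s. \<exists>M'. fires N M s M'}"
  by (auto simp: lang_def dest: fires_subset_trans)

lemma Nil_in_lang [simp]: "[] \<in> lang N M"
  unfolding lang_def by (auto intro: exI[of _ M])

lemma Cons_in_lang_iff: "t # w \<in> lang N M \<longleftrightarrow> enabled N M t \<and> w \<in> lang N (fire N M t)"
  by (auto simp: lang_eq_fires)

lemma lang_fire: "enabled N M t \<Longrightarrow> lang N (fire N M t) = {w. t # w \<in> lang N M}"
  by (simp add: Cons_in_lang_iff)

lemma lang_eq_fire:
  assumes "lang N M = lang N M'" and "enabled N M t"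
  shows "enabled N M' t" and "lang N (fire N M t) = lang N (fire N M' t)"
proof -
  have "fires N M [t] (fire N M t)"
    using assms(2) by simp
  then have "[t] \<in> lang N M"
    by (auto simp: lang_eq_fires)
  then have "[t] \<in> lang N M'"
    using assms(1) by simp
  then show "enabled N M' t"
    by (simp add: Cons_in_lang_iff)
  show "lang N (fire N M t) = lang N (fire N M' t)"
    using assms \<open>enabled N M' t\<close> by (simp add: lang_fire)
qed

lemma reach_refl: "M \<in> reach N M"
  unfolding reach_def by (auto intro: exI[of _ "[]"])

lemma reach_trans: "M \<in> reach N M0 \<Longrightarrow> M' \<in> reach N M \<Longrightarrow> M' \<in> reach N M0"
  unfolding reach_def by (blast intro: fires_append[THEN iffD2])

lemma fires_in_reach: "fires N M s M' \<Longrightarrow> M' \<in> reach N M"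
  unfolding reach_def by blast

lemma reach_fires: "M \<in> reach N M0 \<Longrightarrow> fires N M s M' \<Longrightarrow> M' \<in> reach N M0"
  by (metis fires_in_reach reach_trans)

lemma reach_del_trans_subset: "reach (N \<setminus>\<^sub>N S) M \<subseteq> reach N M"
  by (auto simp: reach_def fires_del_trans_iff)

lemma reach_via_last_downgrade:
  assumes "fires N M0 s M1"
  shows "\<exists>M. (M = M0 \<or> (\<exists>\<upsilon> d. d \<in> D \<and> fires N M0 (\<upsilon> @ [d]) M)) \<and> M1 \<in> reach (N \<setminus>\<^sub>N D) M"
  using assms
proof (induction s arbitrary: M1 rule: rev_induct)
  case Nil
  then show ?case by (intro exI[of _ M0]) (simp add: reach_refl)
next
  case (snoc t s)
  then obtain M' where s: "fires N M0 s M'" and t: "fires N M' [t] M1"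
    using fires_append by blast
  show ?case
  proof (cases "t \<in> D")
    case True
    have "fires N M0 (s @ [t]) M1"
      using s t fires_append by blast
    then show ?thesis
      using True reach_refl by blast
  next
    case False
    with t have "fires (N \<setminus>\<^sub>N D) M' [t] M1" by simp
    moreover obtain M where "M = M0 \<or> (\<exists>\<upsilon> d. d \<in> D \<and> fires N M0 (\<upsilon> @ [d]) M)"
      and "M' \<in> reach (N \<setminus>\<^sub>N D) M"
      using snoc.IH[OF s] by blast
    ultimately show ?thesis using reach_fires by blast
  qed
qed

lemma reach_iff_reach_after_last_downgrade:
  "M1 \<in> reach N M0 \<longleftrightarrow>
    (\<exists>M. (M = M0 \<or> (\<exists>\<upsilon> d. d \<in> D \<and> fires N M0 (\<upsilon> @ [d]) M)) \<and> M1 \<in> reach (N \<setminus>\<^sub>N D) M)"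
proof
  assume "M1 \<in> reach N M0"
  then show "\<exists>M. (M = M0 \<or> (\<exists>\<upsilon> d. d \<in> D \<and> fires N M0 (\<upsilon> @ [d]) M)) \<and> M1 \<in> reach (N \<setminus>\<^sub>N D) M"
    unfolding reach_def[of N M0] using reach_via_last_downgrade by blast
next
  assume "\<exists>M. (M = M0 \<or> (\<exists>\<upsilon> d. d \<in> D \<and> fires N M0 (\<upsilon> @ [d]) M)) \<and> M1 \<in> reach (N \<setminus>\<^sub>N D) M"
  then obtain M where "M \<in> reach N M0" and "M1 \<in> reach N M"
    using reach_refl fires_in_reach reach_del_trans_subset by blast
  then show "M1 \<in> reach N M0"
    by (rule reach_trans)
qed

lemma tau_steps_refl: "tau_steps N Lo M M"
  unfolding tau_steps_def by (auto intro: exI[of _ "[]"])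

lemma tau_steps_reach: "tau_steps N Lo M M' \<Longrightarrow> M' \<in> reach N M"
  unfolding tau_steps_def reach_def by blast

lemma tau_steps_trivial:
  assumes "\<And>u. enabled N M u \<Longrightarrow> u \<in> Lo" and "tau_steps N Lo M M'"
  shows "M' = M"
  using assms unfolding tau_steps_def by (metis disjoint_iff fires.elims(2) list.set_intros(1))

lemma weak_sim_stepI:
  assumes "\<And>M M' l M1. (M, M') \<in> R \<Longrightarrow> l \<in> Lo \<Longrightarrow> fires N1 M [l] M1 \<Longrightarrow>
     \<exists>Ma Mb M2. tau_steps N2 Lo M' Ma \<and> fires N2 Ma [l] Mb \<and> tau_steps N2 Lo Mb M2 \<and> (M1, M2) \<in> R"
    and "\<And>M M' u M1. (M, M') \<in> R \<Longrightarrow> u \<notin> Lo \<Longrightarrow> fires N1 M [u] M1 \<Longrightarrow>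
     \<exists>M2. tau_steps N2 Lo M' M2 \<and> (M1, M2) \<in> R"
  shows "weak_sim_step N1 N2 Lo R"
  unfolding weak_sim_step_def using assms by blast

lemma weak_sim_step_observableD:
  "weak_sim_step N1 N2 Lo R \<Longrightarrow> (M, M') \<in> R \<Longrightarrow> l \<in> Lo \<Longrightarrow> fires N1 M [l] M1 \<Longrightarrow>
   \<exists>Ma Mb M2. tau_steps N2 Lo M' Ma \<and> fires N2 Ma [l] Mb \<and> tau_steps N2 Lo Mb M2 \<and> (M1, M2) \<in> R"
  unfolding weak_sim_step_def by blast

lemma weak_sim_step_unobservableD:
  "weak_sim_step N1 N2 Lo R \<Longrightarrow> (M, M') \<in> R \<Longrightarrow> u \<notin> Lo \<Longrightarrow> fires N1 M [u] M1 \<Longrightarrow>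
   \<exists>M2. tau_steps N2 Lo M' M2 \<and> (M1, M2) \<in> R"
  unfolding weak_sim_step_def by blast

lemma weak_sim_step_restrict_reach:
  assumes "weak_sim_step N1 N2 Lo R"
  shows "weak_sim_step N1 N2 Lo (R \<inter> reach N1 M01 \<times> reach N2 M02)"
proof (rule weak_sim_stepI)
  fix M M' l M1
  assume MM': "(M, M') \<in> R \<inter> reach N1 M01 \<times> reach N2 M02" and "l \<in> Lo" "fires N1 M [l] M1"
  then obtain Ma Mb M2 where "tau_steps N2 Lo M' Ma" "fires N2 Ma [l] Mb" "tau_steps N2 Lo Mb M2"
    and "(M1, M2) \<in> R"
    using weak_sim_step_observableD[OF assms] by blast
  moreover from this MM' have "M2 \<in> reach N2 M02"
    by (metis IntD2 mem_Sigma_iff fires_in_reach reach_trans tau_steps_reach)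
  moreover have "M1 \<in> reach N1 M01"
    using MM' \<open>fires N1 M [l] M1\<close> reach_fires by blast
  ultimately show "\<exists>Ma Mb M2. tau_steps N2 Lo M' Ma \<and> fires N2 Ma [l] Mb \<and> tau_steps N2 Lo Mb M2 \<and>
       (M1, M2) \<in> R \<inter> reach N1 M01 \<times> reach N2 M02"
    by blast
next
  fix M M' u M1
  assume MM': "(M, M') \<in> R \<inter> reach N1 M01 \<times> reach N2 M02" and "u \<notin> Lo" "fires N1 M [u] M1"
  then obtain M2 where "tau_steps N2 Lo M' M2" and "(M1, M2) \<in> R"
    using weak_sim_step_unobservableD[OF assms] by blast
  moreover from this MM' have "M2 \<in> reach N2 M02"
    by (metis IntD2 mem_Sigma_iff reach_trans tau_steps_reach)
  moreover have "M1 \<in> reach N1 M01"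
    using MM' \<open>fires N1 M [u] M1\<close> reach_fires by blast
  ultimately show "\<exists>M2. tau_steps N2 Lo M' M2 \<and> (M1, M2) \<in> R \<inter> reach N1 M01 \<times> reach N2 M02"
    by blast
qed

lemma weak_bisimilarI:
  assumes "(M01, M02) \<in> R" "weak_sim_step N1 N2 Lo R" "weak_sim_step N2 N1 Lo (converse R)"
  shows "weak_bisimilar N1 M01 N2 M02 Lo"
proof -
  have "converse (R \<inter> reach N1 M01 \<times> reach N2 M02) = converse R \<inter> reach N2 M02 \<times> reach N1 M01"
    by auto
  then show ?thesis
    unfolding weak_bisimilar_def using assms reach_refl[of M01 N1] reach_refl[of M02 N2]
    by (intro exI[of _ "R \<inter> reach N1 M01 \<times> reach N2 M02"])
      (auto intro!: weak_sim_step_restrict_reach)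
qed

lemma weak_sim_step_fires_filter:
  assumes sim: "weak_sim_step A B Lo R"
    and observable: "\<And>N u. N \<in> Q \<Longrightarrow> enabled B N u \<Longrightarrow> u \<in> Lo"
    and closed: "\<And>N u N'. N \<in> Q \<Longrightarrow> fires B N [u] N' \<Longrightarrow> N' \<in> Q"
  shows "fires A M s M' \<Longrightarrow> (M, N) \<in> R \<Longrightarrow> N \<in> Q \<Longrightarrow>
    \<exists>N'. (M', N') \<in> R \<and> N' \<in> Q \<and> fires B N (filter (\<lambda>u. u \<in> Lo) s) N'"
proof (induction s arbitrary: M N)
  case Nil
  then show ?case by auto
next
  case (Cons u s)
  define M1 where "M1 = fire A M u"
  have u: "fires A M [u] M1" and s: "fires A M1 s M'"
    using Cons.prems(1) by (simp_all add: M1_def)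
  have no_tau: "N'' = N'" if "tau_steps B Lo N' N''" and "N' \<in> Q" for N' N''
    using tau_steps_trivial[OF observable[OF that(2)] that(1)] .
  show ?case
  proof (cases "u \<in> Lo")
    case True
    then obtain Na Nb N1 where "tau_steps B Lo N Na" "fires B Na [u] Nb" "tau_steps B Lo Nb N1"
      and "(M1, N1) \<in> R"
      using weak_sim_step_observableD[OF sim Cons.prems(2) _ u] by blast
    moreover from this have "Na = N" and "Nb \<in> Q"
      using no_tau closed Cons.prems(3) by blast+
    moreover from calculation have "N1 = Nb"
      using no_tau by blast
    ultimately show ?thesis
      using Cons.IH[OF s] True by fastforce
  next
    case False
    then obtain N1 where "tau_steps B Lo N N1" and "(M1, N1) \<in> R"
      using weak_sim_step_unobservableD[OF sim Cons.prems(2) _ u] by blast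
    then have "(M1, N) \<in> R"
      using no_tau Cons.prems(3) by blast
    then show ?thesis
      using Cons.IH[OF s] Cons.prems(3) False by simp
  qed
qed

lemma weak_sim_step_fires_filter_observable:
  assumes "weak_sim_step A B Lo R" and "trans B \<subseteq> Lo"
    and "fires A M s M'" and "(M, N) \<in> R"
  shows "\<exists>N'. (M', N') \<in> R \<and> fires B N (filter (\<lambda>u. u \<in> Lo) s) N'"
proof -
  have observable: "u \<in> Lo" if "N' \<in> UNIV" "enabled B N' u" for N' u
    using enabled_in_trans[OF that(2)] assms(2) by blast
  have closed: "N'' \<in> UNIV" if "N' \<in> UNIV" "fires B N' [u] N''" for N' u N''
    by simp
  show ?thesis
    using weak_sim_step_fires_filter[of A B Lo R UNIV M s M' N] assms observable closed by blast
qed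

definition proj_mark :: "('p + nat \<Rightarrow> nat) \<Rightarrow> 'p \<Rightarrow> nat" where
  "proj_mark C = (\<lambda>q. C (Inl q))"

definition env_comp ::
  "('p, 't) ptnet \<Rightarrow> 't set \<Rightarrow> (nat, 't + nat) ptnet \<Rightarrow> ('p + nat, 't + nat) ptnet" where
  "env_comp X H N' = par_net (lift_net X) (lift_env N') \<setminus>\<^sub>N (Inl ` H - trans N')"

lemma proj_mark_apply: "proj_mark C q = C (Inl q)"
  by (simp add: proj_mark_def)

lemma proj_lift_mark [simp]: "proj_mark (lift_mark M) = M"
  by (simp add: proj_mark_def lift_mark_def)

lemma proj_union_mark [simp]: "proj_mark (union_mark M M') = M"
  by (simp add: proj_mark_def union_mark_def)

lemma trans_lift_net [simp]: "trans (lift_net Y) = Inl ` trans Y"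
  by (simp add: lift_net_def)

lemma enabled_lift_net:
  "enabled (lift_net Y) K u \<longleftrightarrow> (\<exists>t. u = Inl t \<and> enabled Y (proj_mark K) t)"
  by (auto simp: enabled_def lift_net_def proj_mark_apply)

lemma proj_fire_lift_net: "proj_mark (fire (lift_net Y) K (Inl t)) = fire Y (proj_mark K) t"
  by (auto simp: fun_eq_iff fire_def lift_net_def proj_mark_apply)

lemma map_Inl_in_lang_lift_net: "map Inl w \<in> lang (lift_net Y) K \<longleftrightarrow> w \<in> lang Y (proj_mark K)"
  by (induction w arbitrary: K) (simp_all add: Cons_in_lang_iff enabled_lift_net proj_fire_lift_net)

lemma places_env_comp: "places (env_comp X H N') = Inl ` places X \<union> Inr ` places N'"
  by (simp add: env_comp_def par_net_def lift_net_def lift_env_def)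

lemma trans_env_comp: "trans (env_comp X H N') = (Inl ` trans X \<union> trans N') - (Inl ` H - trans N')"
  by (simp add: env_comp_def par_net_def lift_net_def lift_env_def)

lemma pre_env_comp_Inl:
  "pre (env_comp X H N') (Inl q) u =
     (case u of Inl t \<Rightarrow> if q \<in> places X \<and> t \<in> trans X then pre X q t else 0 | Inr _ \<Rightarrow> 0)"
  by (auto simp add: env_comp_def par_net_def lift_net_def lift_env_def split: sum.split)

lemma post_env_comp_Inl:
  "post (env_comp X H N') u (Inl q) =
     (case u of Inl t \<Rightarrow> if q \<in> places X \<and> t \<in> trans X then post X t q else 0 | Inr _ \<Rightarrow> 0)"
  by (auto simp add: env_comp_def par_net_def lift_net_def lift_env_def split: sum.split)

lemma pre_env_comp_Inr:
  "pre (env_comp X H N') (Inr n) u = (if n \<in> places N' \<and> u \<in> trans N' then pre N' n u else 0)"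
  by (auto simp add: env_comp_def par_net_def lift_net_def lift_env_def split: sum.split)

lemma post_env_comp_Inr:
  "post (env_comp X H N') u (Inr n) = (if n \<in> places N' \<and> u \<in> trans N' then post N' u n else 0)"
  by (auto simp add: env_comp_def par_net_def lift_net_def lift_env_def split: sum.split)

lemmas env_comp_simps = places_env_comp trans_env_comp pre_env_comp_Inl post_env_comp_Inl
  pre_env_comp_Inr post_env_comp_Inr

lemma enabled_env_comp_Inl:
  assumes "t \<in> trans X"
  shows "enabled (env_comp X H N') C (Inl t) \<longleftrightarrow>
    (t \<in> H \<longrightarrow> Inl t \<in> trans N') \<and> enabled X (proj_mark C) t \<and>
    (Inl t \<in> trans N' \<longrightarrow> (\<forall>n \<in> places N'. pre N' n (Inl t) \<le> C (Inr n)))"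
  using assms by (auto simp: enabled_def env_comp_simps proj_mark_apply ball_Un Ball_image_comp)

lemma proj_fire_env_comp:
  "proj_mark (fire (env_comp X H N') C u) =
    (case u of Inl t \<Rightarrow> if t \<in> trans X then fire X (proj_mark C) t else proj_mark C
             | Inr _ \<Rightarrow> proj_mark C)"
  by (auto simp: fun_eq_iff fire_def env_comp_simps proj_mark_apply split: sum.splits)

lemma fire_env_comp_Inr:
  "fire (env_comp X H N') C u (Inr n) =
    (if n \<in> places N' \<and> u \<in> trans N' then C (Inr n) + post N' u n - pre N' n u else C (Inr n))"
  by (auto simp: fire_def env_comp_simps)

lemma fires_env_comp_Inl:
  "fires (env_comp X H N') C [Inl t] C' \<Longrightarrow> t \<in> trans X \<Longrightarrow> fires X (proj_mark C) [t] (proj_mark C')"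
  by (auto simp: enabled_env_comp_Inl proj_fire_env_comp)

lemma fires_env_comp_proj_mark:
  "fires (env_comp X H N') C [u] C' \<Longrightarrow> u \<notin> Inl ` trans X \<Longrightarrow> proj_mark C' = proj_mark C"
  by (auto simp: proj_fire_env_comp split: sum.splits)

lemma fires_env_comp_map_Inl:
  "set w \<subseteq> trans X \<Longrightarrow> fires (env_comp X H N') C (map Inl w) C' \<Longrightarrow>
    fires X (proj_mark C) w (proj_mark C')"
proof (induction w arbitrary: C)
  case (Cons t w)
  let ?C1 = "fire (env_comp X H N') C (Inl t)"
  have "fires X (proj_mark C) [t] (proj_mark ?C1)"
    using Cons.prems fires_env_comp_Inl[of X H N' C t ?C1] by simp
  moreover have "fires X (proj_mark ?C1) w (proj_mark C')"
    using Cons.prems Cons.IH[of ?C1] by simp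
  ultimately show ?case
    by simp
qed simp

lemma env_comp_low_step:
  assumes "l \<in> trans X" "l \<notin> H" "Inl l \<notin> trans N'"
  shows "enabled (env_comp X H N') C (Inl l) \<longleftrightarrow> enabled (X \<setminus>\<^sub>N H) (proj_mark C) l"
    and "proj_mark (fire (env_comp X H N') C (Inl l)) = fire (X \<setminus>\<^sub>N H) (proj_mark C) l"
  using assms by (auto simp: enabled_env_comp_Inl proj_fire_env_comp)

definition low_lang_rel ::
  "('p, 't) ptnet \<Rightarrow> 't set \<Rightarrow> ('p \<Rightarrow> nat) \<Rightarrow> (('p + nat \<Rightarrow> nat) \<times> ('p + nat \<Rightarrow> nat)) set" where
  "low_lang_rel X H M = {(K, C). proj_mark C \<in> reach X M \<and>
     lang (X \<setminus>\<^sub>N H) (proj_mark K) = lang (X \<setminus>\<^sub>N H) (proj_mark C)}"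

lemma low_lang_rel_low_step:
  assumes "(K, C) \<in> low_lang_rel X H M" and "l \<in> trans X" "l \<notin> H" "Inl l \<notin> trans N'"
    and "enabled (X \<setminus>\<^sub>N H) (proj_mark K) l \<or> enabled (X \<setminus>\<^sub>N H) (proj_mark C) l"
  shows "enabled (lift_net (X \<setminus>\<^sub>N H)) K (Inl l)" and "enabled (env_comp X H N') C (Inl l)"
    and "(fire (lift_net (X \<setminus>\<^sub>N H)) K (Inl l), fire (env_comp X H N') C (Inl l)) \<in> low_lang_rel X H M"
proof -
  have same_lang: "lang (X \<setminus>\<^sub>N H) (proj_mark K) = lang (X \<setminus>\<^sub>N H) (proj_mark C)"
    and reach_C: "proj_mark C \<in> reach X M"
    using assms(1) by (auto simp: low_lang_rel_def)
  then have enabled: "enabled (X \<setminus>\<^sub>N H) (proj_mark K) l" "enabled (X \<setminus>\<^sub>N H) (proj_mark C) l"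
    using assms(5) lang_eq_fire(1) by metis+
  then show "enabled (lift_net (X \<setminus>\<^sub>N H)) K (Inl l)" "enabled (env_comp X H N') C (Inl l)"
    using env_comp_low_step(1)[OF assms(2-4)] by (simp_all add: enabled_lift_net)
  have "fires X (proj_mark C) [l] (fire X (proj_mark C) l)"
    using enabled(2) by simp
  then have "fire X (proj_mark C) l \<in> reach X M"
    using reach_C reach_fires by blast
  moreover have "lang (X \<setminus>\<^sub>N H) (fire X (proj_mark K) l) = lang (X \<setminus>\<^sub>N H) (fire X (proj_mark C) l)"
    using lang_eq_fire(2)[OF same_lang enabled(1)] by simp
  ultimately show
    "(fire (lift_net (X \<setminus>\<^sub>N H)) K (Inl l), fire (env_comp X H N') C (Inl l)) \<in> low_lang_rel X H M"
    by (simp add: low_lang_rel_def proj_fire_lift_net env_comp_low_step(2)[OF assms(2-4)])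
qed

lemma weak_sim_step_low_lang_rel:
  assumes "trans X = L \<union> H" and "L \<inter> H = {}" and "trans N' \<inter> Inl ` L = {}"
  shows "weak_sim_step (lift_net (X \<setminus>\<^sub>N H)) (env_comp X H N') (Inl ` L) (low_lang_rel X H M)"
proof (rule weak_sim_stepI)
  fix K C u K1
  assume KC: "(K, C) \<in> low_lang_rel X H M" and "u \<in> Inl ` L"
    and step: "fires (lift_net (X \<setminus>\<^sub>N H)) K [u] K1"
  then obtain l where "u = Inl l" and "l \<in> L"
    by blast
  moreover from this have "l \<in> trans X" "l \<notin> H" "Inl l \<notin> trans N'"
    using assms by blast+
  moreover have "enabled (X \<setminus>\<^sub>N H) (proj_mark K) l"
    using step \<open>u = Inl l\<close> by (simp add: enabled_lift_net)
  ultimately have "fires (env_comp X H N') C [u] (fire (env_comp X H N') C u)"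
    and "(K1, fire (env_comp X H N') C u) \<in> low_lang_rel X H M"
    using low_lang_rel_low_step[OF KC] step by simp_all
  then show "\<exists>Ca Cb C1. tau_steps (env_comp X H N') (Inl ` L) C Ca \<and> fires (env_comp X H N') Ca [u] Cb \<and>
      tau_steps (env_comp X H N') (Inl ` L) Cb C1 \<and> (K1, C1) \<in> low_lang_rel X H M"
    using tau_steps_refl by blast
next
  fix K C u K1
  assume "u \<notin> Inl ` L" "fires (lift_net (X \<setminus>\<^sub>N H)) K [u] K1"
  then show "\<exists>C1. tau_steps (env_comp X H N') (Inl ` L) C C1 \<and> (K1, C1) \<in> low_lang_rel X H M"
    using assms(1,2) enabled_in_trans by fastforce
qed

lemma env_comp_silent_step:
  assumes trans_X: "trans X = L \<union> H"
    and preserve: "\<And>M1 h M2. M1 \<in> reach X M \<Longrightarrow> h \<in> H \<Longrightarrow> fires X M1 [h] M2 \<Longrightarrow>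
      lang (X \<setminus>\<^sub>N H) M1 = lang (X \<setminus>\<^sub>N H) M2"
    and reach_C: "proj_mark C \<in> reach X M"
    and "u \<notin> Inl ` L" and step: "fires (env_comp X H N') C [u] C1"
  shows "proj_mark C1 \<in> reach X M \<and> lang (X \<setminus>\<^sub>N H) (proj_mark C1) = lang (X \<setminus>\<^sub>N H) (proj_mark C)"
proof (cases "u \<in> Inl ` trans X")
  case True
  then obtain h where "u = Inl h" "h \<in> H" "h \<in> trans X"
    using \<open>u \<notin> Inl ` L\<close> trans_X by auto
  then have "fires X (proj_mark C) [h] (proj_mark C1)"
    using step fires_env_comp_Inl[of X H N' C h C1] by simp
  then show ?thesis
    using preserve[OF reach_C \<open>h \<in> H\<close>] reach_C reach_fires by metis
next
  case False
  then show ?thesis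
    using step reach_C fires_env_comp_proj_mark by metis
qed

lemma weak_sim_step_converse_low_lang_rel:
  assumes trans_X: "trans X = L \<union> H" and "L \<inter> H = {}" and "trans N' \<inter> Inl ` L = {}"
    and preserve: "\<And>M1 h M2. M1 \<in> reach X M \<Longrightarrow> h \<in> H \<Longrightarrow> fires X M1 [h] M2 \<Longrightarrow>
      lang (X \<setminus>\<^sub>N H) M1 = lang (X \<setminus>\<^sub>N H) M2"
  shows "weak_sim_step (env_comp X H N') (lift_net (X \<setminus>\<^sub>N H)) (Inl ` L) (converse (low_lang_rel X H M))"
proof (rule weak_sim_stepI)
  fix C K u C1
  assume "(C, K) \<in> converse (low_lang_rel X H M)" and "u \<in> Inl ` L"
    and step: "fires (env_comp X H N') C [u] C1"
  then have KC: "(K, C) \<in> low_lang_rel X H M"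
    by simp
  obtain l where "u = Inl l" and "l \<in> L"
    using \<open>u \<in> Inl ` L\<close> by blast
  moreover from this have "l \<in> trans X" "l \<notin> H" "Inl l \<notin> trans N'"
    using assms(1-3) by blast+
  moreover from this have "enabled (X \<setminus>\<^sub>N H) (proj_mark C) l"
    using step \<open>u = Inl l\<close> env_comp_low_step(1)[of l X H N' C] by simp
  ultimately have "fires (lift_net (X \<setminus>\<^sub>N H)) K [u] (fire (lift_net (X \<setminus>\<^sub>N H)) K u)"
    and "(C1, fire (lift_net (X \<setminus>\<^sub>N H)) K u) \<in> converse (low_lang_rel X H M)"
    using low_lang_rel_low_step[OF KC] step by simp_all
  then show "\<exists>Ka Kb K1. tau_steps (lift_net (X \<setminus>\<^sub>N H)) (Inl ` L) K Ka \<and>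
      fires (lift_net (X \<setminus>\<^sub>N H)) Ka [u] Kb \<and> tau_steps (lift_net (X \<setminus>\<^sub>N H)) (Inl ` L) Kb K1 \<and>
      (C1, K1) \<in> converse (low_lang_rel X H M)"
    using tau_steps_refl by blast
next
  fix C K u C1
  assume KC: "(C, K) \<in> converse (low_lang_rel X H M)" and "u \<notin> Inl ` L"
    and step: "fires (env_comp X H N') C [u] C1"
  have "proj_mark C \<in> reach X M"
    using KC by (simp add: low_lang_rel_def)
  then have "proj_mark C1 \<in> reach X M \<and> lang (X \<setminus>\<^sub>N H) (proj_mark C1) = lang (X \<setminus>\<^sub>N H) (proj_mark C)"
    using env_comp_silent_step[of X L H M C u N' C1] trans_X preserve \<open>u \<notin> Inl ` L\<close> step
    by blast
  then show "\<exists>K1. tau_steps (lift_net (X \<setminus>\<^sub>N H)) (Inl ` L) K K1 \<and>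
      (C1, K1) \<in> converse (low_lang_rel X H M)"
    using KC by (intro exI[of _ K]) (simp add: low_lang_rel_def tau_steps_refl)
qed

lemma BNDC_if_high_steps_preserve_lang:
  fixes X :: "('p, 't) ptnet"
  assumes "trans X = L \<union> H" and "L \<inter> H = {}"
    and "\<And>M1 h M2. M1 \<in> reach X M \<Longrightarrow> h \<in> H \<Longrightarrow> fires X M1 [h] M2 \<Longrightarrow>
      lang (X \<setminus>\<^sub>N H) M1 = lang (X \<setminus>\<^sub>N H) M2"
  shows "BNDC X M L H"
  unfolding BNDC_def env_comp_def[symmetric]
proof (intro allI impI)
  fix N' :: "(nat, 't + nat) ptnet" and M0' :: "nat \<Rightarrow> nat"
  assume "net_wf N' \<and> trans N' \<inter> Inl ` L = {}"
  moreover have "(lift_mark M, union_mark M M0') \<in> low_lang_rel X H M"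
    by (simp add: low_lang_rel_def reach_refl)
  ultimately show "weak_bisimilar (lift_net (X \<setminus>\<^sub>N H)) (lift_mark M) (env_comp X H N')
      (union_mark M M0') (Inl ` L)"
    using assms weak_bisimilarI weak_sim_step_low_lang_rel weak_sim_step_converse_low_lang_rel
    by metis
qed

definition high_budget_env :: "'t set \<Rightarrow> (nat, 't + nat) ptnet" where
  "high_budget_env H = \<lparr>places = {0}, trans = Inl ` H, pre = (\<lambda>n u. 1), post = (\<lambda>u n. 0)\<rparr>"

lemma high_budget_env_simps [simp]:
  "places (high_budget_env H) = {0}" "trans (high_budget_env H) = Inl ` H"
  "pre (high_budget_env H) n u = 1" "post (high_budget_env H) u n = 0"
  by (simp_all add: high_budget_env_def)

lemma trans_budget_env_comp: "trans (env_comp X H (high_budget_env H)) = Inl ` (trans X \<union> H)"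
  by (auto simp: trans_env_comp)

lemma enabled_budget_env_comp_Inl:
  "t \<in> trans X \<Longrightarrow> enabled (env_comp X H (high_budget_env H)) C (Inl t) \<longleftrightarrow>
    enabled X (proj_mark C) t \<and> (t \<in> H \<longrightarrow> 0 < C (Inr 0))"
  by (auto simp: enabled_env_comp_Inl)

lemma enabled_budget_env_comp_high:
  "enabled (env_comp X H (high_budget_env H)) C (Inl h) \<Longrightarrow> h \<in> H \<Longrightarrow> 0 < C (Inr 0)"
  by (force simp: enabled_def env_comp_simps)

lemma fire_budget_env_comp_Inl_Inr:
  "fire (env_comp X H (high_budget_env H)) C (Inl t) (Inr 0) =
    (if t \<in> H then C (Inr 0) - 1 else C (Inr 0))"
  by (auto simp: fire_env_comp_Inr)

lemma fires_budget_env_comp: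
  assumes "fires X (proj_mark C) s M'" and "length (filter (\<lambda>t. t \<in> H) s) \<le> C (Inr 0)"
  shows "\<exists>C'. fires (env_comp X H (high_budget_env H)) C (map Inl s) C' \<and> proj_mark C' = M' \<and>
    C' (Inr 0) = C (Inr 0) - length (filter (\<lambda>t. t \<in> H) s)"
  using assms
proof (induction s arbitrary: C)
  case Nil
  then show ?case by simp
next
  case (Cons t s)
  let ?C1 = "fire (env_comp X H (high_budget_env H)) C (Inl t)"
  have "enabled X (proj_mark C) t"
    using Cons.prems(1) by simp
  moreover from this have "t \<in> trans X"
    by (rule enabled_in_trans)
  moreover have "proj_mark ?C1 = fire X (proj_mark C) t"
    using \<open>t \<in> trans X\<close> by (simp add: proj_fire_env_comp)
  ultimately show ?case
    using Cons.prems Cons.IH[of ?C1]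
    by (auto simp: enabled_budget_env_comp_Inl fire_budget_env_comp_Inl_Inr)
qed

lemma enabled_budget_env_comp_exhausted:
  assumes "trans X \<subseteq> L \<union> H" and "C (Inr 0) = 0"
    and "enabled (env_comp X H (high_budget_env H)) C u"
  shows "u \<in> Inl ` L"
proof -
  have "u \<in> Inl ` (trans X \<union> H)"
    using enabled_in_trans[OF assms(3)] by (simp add: trans_budget_env_comp)
  moreover have "u \<notin> Inl ` H"
    using enabled_budget_env_comp_high[of X H C] assms(2,3) by auto
  ultimately show ?thesis
    using assms(1) by auto
qed

lemma fires_budget_env_comp_exhausted:
  assumes "trans X \<subseteq> L \<union> H" and "L \<inter> H = {}" and "C (Inr 0) = 0"
    and "fires (env_comp X H (high_budget_env H)) C [u] C'"
  shows "C' (Inr 0) = 0"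
proof -
  obtain l where "u = Inl l" "l \<notin> H"
    using enabled_budget_env_comp_exhausted[of X L H C u] assms by auto
  then show ?thesis
    using assms(3,4) by (simp add: fire_budget_env_comp_Inl_Inr)
qed

text \<open>An exhausted budget leaves the composite without silent moves, and low steps keep it
  exhausted.\<close>

lemma weak_sim_step_fires_filter_budget_exhausted:
  fixes X :: "('p, 't) ptnet"
  assumes trans_X: "trans X = L \<union> H" and "L \<inter> H = {}"
    and sim: "weak_sim_step S (env_comp X H (high_budget_env H)) (Inl ` L) R"
    and "(K, C) \<in> R" and "C (Inr 0) = 0" and run: "fires S K s K'"
  shows "\<exists>C'. fires (env_comp X H (high_budget_env H)) C (filter (\<lambda>u. u \<in> Inl ` L) s) C'"
proof -
  define exhausted :: "('p + nat \<Rightarrow> nat) set" where "exhausted = {C. C (Inr 0) = 0}"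
  have observable: "u \<in> Inl ` L"
    if "C' \<in> exhausted" "enabled (env_comp X H (high_budget_env H)) C' u" for C' u
    using enabled_budget_env_comp_exhausted[of X L H C' u] that trans_X
    by (auto simp: exhausted_def)
  have closed: "C'' \<in> exhausted"
    if "C' \<in> exhausted" "fires (env_comp X H (high_budget_env H)) C' [u] C''" for C' u C''
    using fires_budget_env_comp_exhausted[of X L H C' u C''] that trans_X \<open>L \<inter> H = {}\<close>
    by (auto simp: exhausted_def)
  have "C \<in> exhausted"
    using \<open>C (Inr 0) = 0\<close> by (simp add: exhausted_def)
  then show ?thesis
    using weak_sim_step_fires_filter[of S "env_comp X H (high_budget_env H)" "Inl ` L" R exhausted
        K s K' C]
      sim observable closed run \<open>(K, C) \<in> R\<close>
    by blast
qed

lemma lang_subset_if_budget_exhausted: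
  assumes trans_X: "trans X = L \<union> H" and "L \<inter> H = {}"
    and sim: "weak_sim_step (lift_net (X \<setminus>\<^sub>N H)) (env_comp X H (high_budget_env H)) (Inl ` L) R"
    and "(K, C) \<in> R" and "C (Inr 0) = 0"
  shows "lang (X \<setminus>\<^sub>N H) (proj_mark K) \<subseteq> lang (X \<setminus>\<^sub>N H) (proj_mark C)"
proof
  fix w
  assume w: "w \<in> lang (X \<setminus>\<^sub>N H) (proj_mark K)"
  then have "set w \<subseteq> L"
    using trans_X \<open>L \<inter> H = {}\<close> by (auto simp: lang_def)
  then have low_word: "filter (\<lambda>u. u \<in> Inl ` L) (map Inl w) = map Inl w"
    by (auto simp: filter_id_conv)
  have "map Inl w \<in> lang (lift_net (X \<setminus>\<^sub>N H)) K"
    using w map_Inl_in_lang_lift_net by blast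
  then obtain K' where "fires (lift_net (X \<setminus>\<^sub>N H)) K (map Inl w) K'"
    by (auto simp: lang_eq_fires)
  then obtain C' where "fires (env_comp X H (high_budget_env H)) C (map Inl w) C'"
    using weak_sim_step_fires_filter_budget_exhausted[OF trans_X \<open>L \<inter> H = {}\<close> sim] \<open>(K, C) \<in> R\<close>
      \<open>C (Inr 0) = 0\<close> low_word
    by metis
  moreover have "set w \<subseteq> trans X"
    using \<open>set w \<subseteq> L\<close> trans_X by blast
  ultimately have "fires X (proj_mark C) w (proj_mark C')"
    using fires_env_comp_map_Inl by blast
  moreover have "set w \<inter> H = {}"
    using \<open>set w \<subseteq> L\<close> \<open>L \<inter> H = {}\<close> by blast
  ultimately have "fires (X \<setminus>\<^sub>N H) (proj_mark C) w (proj_mark C')"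
    by (simp add: fires_del_trans_iff)
  then show "w \<in> lang (X \<setminus>\<^sub>N H) (proj_mark C)"
    unfolding lang_eq_fires by blast
qed

lemma lang_subset_if_simulated_by_low_net:
  assumes trans_X: "trans X = L \<union> H" and "L \<inter> H = {}"
    and sim: "weak_sim_step (env_comp X H (high_budget_env H)) (lift_net (X \<setminus>\<^sub>N H)) (Inl ` L) R"
    and "(C, K) \<in> R"
  shows "lang (X \<setminus>\<^sub>N H) (proj_mark C) \<subseteq> lang (X \<setminus>\<^sub>N H) (proj_mark K)"
proof
  fix w
  assume w: "w \<in> lang (X \<setminus>\<^sub>N H) (proj_mark C)"
  then obtain M' where "fires X (proj_mark C) w M'" and "set w \<inter> H = {}"
    by (auto simp: lang_eq_fires fires_del_trans_iff)
  moreover from this have "filter (\<lambda>t. t \<in> H) w = []"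
    by (auto simp: filter_empty_conv)
  ultimately obtain C' where "fires (env_comp X H (high_budget_env H)) C (map Inl w) C'"
    using fires_budget_env_comp[of X C w M' H] by auto
  moreover have "trans (lift_net (X \<setminus>\<^sub>N H)) \<subseteq> Inl ` L"
    using trans_X by auto
  ultimately obtain K' where
    "fires (lift_net (X \<setminus>\<^sub>N H)) K (filter (\<lambda>u. u \<in> Inl ` L) (map Inl w)) K'"
    using weak_sim_step_fires_filter_observable[OF sim] \<open>(C, K) \<in> R\<close> by blast
  moreover have "set w \<subseteq> L"
    using w trans_X \<open>L \<inter> H = {}\<close> by (auto simp: lang_def)
  then have "filter (\<lambda>u. u \<in> Inl ` L) (map Inl w) = map Inl w"
    by (auto simp: filter_id_conv)
  ultimately have "fires (lift_net (X \<setminus>\<^sub>N H)) K (map Inl w) K'"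
    by metis
  then have "map Inl w \<in> lang (lift_net (X \<setminus>\<^sub>N H)) K"
    unfolding lang_eq_fires by blast
  then show "w \<in> lang (X \<setminus>\<^sub>N H) (proj_mark K)"
    using map_Inl_in_lang_lift_net by blast
qed

lemma BNDC_fires_low_projection:
  assumes "finite H" and trans_X: "trans X = L \<union> H" and "L \<inter> H = {}"
    and "BNDC X M L H" and "fires X M s M'"
  shows "\<exists>K. fires (lift_net (X \<setminus>\<^sub>N H)) (lift_mark M) (filter (\<lambda>u. u \<in> Inl ` L) (map Inl s)) K \<and>
    lang (X \<setminus>\<^sub>N H) (proj_mark K) = lang (X \<setminus>\<^sub>N H) M'"
proof -
  let ?S = "lift_net (X \<setminus>\<^sub>N H)"
  let ?B = "env_comp X H (high_budget_env H)"
  define budget where "budget = length (filter (\<lambda>t. t \<in> H) s)"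
  have "net_wf (high_budget_env H) \<and> trans (high_budget_env H) \<inter> Inl ` L = {}"
    using \<open>finite H\<close> \<open>L \<inter> H = {}\<close> by (auto simp: net_wf_def)
  then have "weak_bisimilar ?S (lift_mark M) ?B (union_mark M (\<lambda>_. budget)) (Inl ` L)"
    using \<open>BNDC X M L H\<close> unfolding BNDC_def env_comp_def by blast
  then obtain R where R: "(lift_mark M, union_mark M (\<lambda>_. budget)) \<in> R"
    and sim: "weak_sim_step ?S ?B (Inl ` L) R"
    and sim_converse: "weak_sim_step ?B ?S (Inl ` L) (converse R)"
    unfolding weak_bisimilar_def by blast
  have "union_mark M (\<lambda>_. budget) (Inr 0) = budget"
    by (simp add: union_mark_def)
  then obtain C' where "fires ?B (union_mark M (\<lambda>_. budget)) (map Inl s) C'"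
    and "proj_mark C' = M'" and "C' (Inr 0) = 0"
    using fires_budget_env_comp[of X "union_mark M (\<lambda>_. budget)" s M' H] \<open>fires X M s M'\<close>
    by (auto simp: budget_def)
  moreover have "trans ?S \<subseteq> Inl ` L"
    using trans_X by auto
  moreover obtain K where "(C', K) \<in> converse R"
    and "fires ?S (lift_mark M) (filter (\<lambda>u. u \<in> Inl ` L) (map Inl s)) K"
    using weak_sim_step_fires_filter_observable[OF sim_converse calculation(4,1)] R by auto
  ultimately show ?thesis
    using lang_subset_if_budget_exhausted[OF trans_X \<open>L \<inter> H = {}\<close> sim]
      lang_subset_if_simulated_by_low_net[OF trans_X \<open>L \<inter> H = {}\<close> sim_converse]
    by (metis converseD subset_antisym)
qed

lemma high_step_preserves_lang_if_BNDC:
  assumes "finite H" and "trans X = L \<union> H" and "L \<inter> H = {}" and "BNDC X M L H"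
    and "M1 \<in> reach X M" and "h \<in> H" and "fires X M1 [h] M2"
  shows "lang (X \<setminus>\<^sub>N H) M1 = lang (X \<setminus>\<^sub>N H) M2"
proof -
  obtain s where s: "fires X M s M1"
    using \<open>M1 \<in> reach X M\<close> by (auto simp: reach_def)
  then have "fires X M (s @ [h]) M2"
    using \<open>fires X M1 [h] M2\<close> fires_append by blast
  moreover have "filter (\<lambda>u. u \<in> Inl ` L) (map Inl (s @ [h])) = filter (\<lambda>u. u \<in> Inl ` L) (map Inl s)"
    using \<open>h \<in> H\<close> \<open>L \<inter> H = {}\<close> by auto
  ultimately show ?thesis
    using BNDC_fires_low_projection[OF assms(1-4)] s fires_deterministic by metis
qed

theorem BNDC_iff_high_steps_preserve_lang:
  assumes "finite H" and "trans X = L \<union> H" and "L \<inter> H = {}"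
  shows "BNDC X M L H \<longleftrightarrow> (\<forall>M1 \<in> reach X M. \<forall>h \<in> H. \<forall>M2. fires X M1 [h] M2 \<longrightarrow>
    lang (X \<setminus>\<^sub>N H) M1 = lang (X \<setminus>\<^sub>N H) M2)"
  using high_step_preserves_lang_if_BNDC[OF assms] BNDC_if_high_steps_preserve_lang[OF assms(2,3)]
  by blast

theorem lemma4:
  fixes N :: "('p, 't) ptnet" and M0 :: "'p \<Rightarrow> nat" and L D H :: "'t set"
  assumes "net_wf N"
    and "trans N = L \<union> D \<union> H"
    and "L \<inter> D = {}" and "L \<inter> H = {}" and "D \<inter> H = {}"
  shows "BINI N M0 L D H \<longleftrightarrow>
         (\<forall>M1 \<in> reach N M0. \<forall>h \<in> H. \<forall>M2. fires N M1 [h] M2 \<longrightarrow>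
            lang (N \<setminus>\<^sub>N (H \<union> D)) M1 = lang (N \<setminus>\<^sub>N (H \<union> D)) M2)"
proof -
  have "finite H"
    using assms(1,2) by (simp add: net_wf_def)
  have "trans (N \<setminus>\<^sub>N D) = L \<union> H"
    using assms(2-5) by auto
  have BNDC_iff: "BNDC (N \<setminus>\<^sub>N D) M L H \<longleftrightarrow>
      (\<forall>M1 \<in> reach (N \<setminus>\<^sub>N D) M. \<forall>h \<in> H. \<forall>M2. fires (N \<setminus>\<^sub>N D) M1 [h] M2 \<longrightarrow>
        lang (N \<setminus>\<^sub>N (H \<union> D)) M1 = lang (N \<setminus>\<^sub>N (H \<union> D)) M2)" for M
    using BNDC_iff_high_steps_preserve_lang[OF \<open>finite H\<close> \<open>trans (N \<setminus>\<^sub>N D) = L \<union> H\<close>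
        \<open>L \<inter> H = {}\<close>]
    unfolding del_trans_del_trans .
  have "fires (N \<setminus>\<^sub>N D) M1 [h] M2 \<longleftrightarrow> fires N M1 [h] M2" if "h \<in> H" for M1 h M2
    using that \<open>D \<inter> H = {}\<close> by (auto simp: fires_del_trans_iff)
  then show ?thesis
    unfolding BINI_def BNDC_iff Ball_def reach_iff_reach_after_last_downgrade[of _ N M0 D]
    by blast
qed

end
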